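(* Fix $N\ge 1$ and $\Delta t>0$. Let $\mathbf{b}_n,\mathbf{b}_{n+1}\in\mathbb{C}^N$ with components $b_{j,n},b_{j,n+1}$, with the convention $b_{0,m}=b_{N+1,m}=0$ for $m\in\{n,n+1\}$, and suppose that $\mathbf{b}_{n+1}$ is an exact solution of the system $$b_{j,n+1}=b_{j,n}+\Delta t\Big(-i\,|b|^2_{j,n+1/2}\,b_{j,n+1/2}+2i\,\overline{b_{j,n+1/2}}\,\big[(b^2)_{j+1,n+1/2}+(b^2)_{j-1,n+1/2}\big]\Big),\qquad j=1,\dots,N,$$ where $b_{j,n+1/2}=\tfrac12(b_{j,n}+b_{j,n+1})$, $|b|^2_{j,n+1/2}=\tfrac12(|b_{j,n}|^2+|b_{j,n+1}|^2)$ and $(b^2)_{j,n+1/2}=\tfrac12(b_{j,n}^2+b_{j,n+1}^2)$. Then $\mathcal{H}[\mathbf{b}_{n+1}]=\mathcal{H}[\mathbf{b}_n]$, where $$\mathcal{H}[\mathbf{b}]=\sum_{j=1}^N\Big(\tfrac14|b_j|^4-\operatorname{Re}\big(\bar b_j^{\,2}\,b_{j-1}^2\big)\Big),\qquad b_0=0.$$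
   Context: This is an energy-preserving discretization of the toy model system $-i\dot b_j=-|b_j|^2b_j+2b_{j-1}^2\bar b_j+2b_{j+1}^2\bar b_j$, $j=1,\dots,N$, with $b_0=b_{N+1}=0$, whose Hamiltonian is $\mathcal{H}$. *)

theory Defs
  imports Complex_Main
begin

text \<open>A vector in C^N is represented by a function nat => complex whose
 entries at indices 1..N are the components; ext_bc enforces the
 boundary convention b_0 = b_{N+1} = 0 (and zero outside 1..N).\<close>

definition ext_bc :: "nat \<Rightarrow> (nat \<Rightarrow> complex) \<Rightarrow> nat \<Rightarrow> complex" where
  "ext_bc N b j = (if 1 \<le> j \<and> j \<le> N then b j else 0)"

definition Ham :: "nat \<Rightarrow> (nat \<Rightarrow> complex) \<Rightarrow> real" where
  "Ham N b = (\<Sum>j=1..N. (1/4) * cmod (ext_bc N b j) ^ 4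
      - Re ((cnj (ext_bc N b j))\<^sup>2 * (ext_bc N b (j - 1))\<^sup>2))"

definition scheme_step :: "nat \<Rightarrow> real \<Rightarrow> (nat \<Rightarrow> complex) \<Rightarrow> (nat \<Rightarrow> complex) \<Rightarrow> bool" where
  "scheme_step N dt b b' \<longleftrightarrow>
    (\<forall>j\<in>{1..N}.
      let bm = (\<lambda>k. (ext_bc N b k + ext_bc N b' k) / 2);
          abs2m = (\<lambda>k. (cmod (ext_bc N b k) ^ 2 + cmod (ext_bc N b' k) ^ 2) / 2);
          sqm = (\<lambda>k. ((ext_bc N b k)\<^sup>2 + (ext_bc N b' k)\<^sup>2) / 2)
      in b' j = b j + complex_of_real dt *
           (- \<i> * complex_of_real (abs2m j) * bm j
            + 2 * \<i> * cnj (bm j) * (sqm (j + 1) + sqm (j - 1))))"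

end

theory Submission
  imports Defs
begin

text \<open>Write \<open>x = b\<^sub>n\<close>, \<open>y = b\<^sub>n\<^sub>+\<^sub>1\<close> (extended by zero) and
  \<open>e\<^sub>j(b) = |b\<^sub>j|\<^sup>4/4 - Re (conj(b\<^sub>j)\<^sup>2 b\<^sub>j\<^sub>-\<^sub>1\<^sup>2)\<close>. An exact algebraic identity writes the
  increment \<open>e\<^sub>j(y) - e\<^sub>j(x)\<close> as the discrete work \<open>Re ((y\<^sub>j - x\<^sub>j) conj G\<^sub>j)\<close> done by the
  midpoint right-hand side \<open>G\<^sub>j\<close> of the scheme, plus the difference \<open>\<Phi>\<^sub>j - \<Phi>\<^sub>j\<^sub>-\<^sub>1\<close> of an
  energy flux between neighbouring sites. The scheme says \<open>y\<^sub>j - x\<^sub>j = -i \<Delta>t G\<^sub>j\<close>, so the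
  work vanishes, and summing over \<open>j\<close> leaves \<open>\<Phi>\<^sub>N - \<Phi>\<^sub>0\<close>, which is zero because
  of the boundary conditions.\<close>

definition energy_flux :: "nat \<Rightarrow> (nat \<Rightarrow> complex) \<Rightarrow> (nat \<Rightarrow> complex) \<Rightarrow> nat \<Rightarrow> real" where
  "energy_flux N b b' k =
     Re (cnj ((ext_bc N b (k + 1))\<^sup>2 + (ext_bc N b' (k + 1))\<^sup>2)
         * ((ext_bc N b' k)\<^sup>2 - (ext_bc N b k)\<^sup>2)) / 2"

lemma energy_flux_0 [simp]: "energy_flux N b b' 0 = 0"
  by (simp add: energy_flux_def ext_bc_def)

lemma energy_flux_N [simp]: "energy_flux N b b' N = 0"
  by (simp add: energy_flux_def ext_bc_def)

lemma Re_real_mult_i_mult_cnj_self: "Re (complex_of_real r * (- \<i> * z) * cnj z) = 0"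
  by (cases z) (simp add: algebra_simps)

lemma local_energy_diff:
  fixes x y xp yp :: complex
  shows "((1/4) * cmod y ^ 4 - Re ((cnj y)\<^sup>2 * yp\<^sup>2)) - ((1/4) * cmod x ^ 4 - Re ((cnj x)\<^sup>2 * xp\<^sup>2))
    = (cmod x ^ 2 + cmod y ^ 2) / 2 * Re ((y - x) * cnj ((x + y) / 2))
      - Re (cnj (xp\<^sup>2 + yp\<^sup>2) * (y\<^sup>2 - x\<^sup>2)) / 2 - Re (cnj (x\<^sup>2 + y\<^sup>2) * (yp\<^sup>2 - xp\<^sup>2)) / 2"
proof -
  have cmod4: "cmod z ^ 4 = (Re z ^ 2 + Im z ^ 2)\<^sup>2" for z
    by (metis cmod_power2 power_mult numeral_times_numeral num_double)
  show ?thesis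
    unfolding cmod4 cmod_power2 by (simp add: power2_eq_square field_simps)
qed

lemma scheme_step_site_energy_diff:
  assumes step: "scheme_step N dt b b'" and j: "j \<in> {1..N}"
  defines "x \<equiv> ext_bc N b" and "y \<equiv> ext_bc N b'"
  shows "((1/4) * cmod (y j) ^ 4 - Re ((cnj (y j))\<^sup>2 * (y (j - 1))\<^sup>2))
       - ((1/4) * cmod (x j) ^ 4 - Re ((cnj (x j))\<^sup>2 * (x (j - 1))\<^sup>2))
     = energy_flux N b b' j - energy_flux N b b' (j - 1)"
proof -
  define m where "m = (x j + y j) / 2"
  define a where "a = (cmod (x j) ^ 2 + cmod (y j) ^ 2) / 2"
  define s where "s k = ((x k)\<^sup>2 + (y k)\<^sup>2) / 2" for k
  define G where "G = complex_of_real a * m - 2 * cnj m * (s (j + 1) + s (j - 1))"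
  have "b' j = b j + complex_of_real dt * (- \<i> * complex_of_real a * m
          + 2 * \<i> * cnj m * (s (j + 1) + s (j - 1)))"
    using step j unfolding scheme_step_def Let_def a_def m_def s_def x_def y_def by blast
  moreover have "y j = b' j" "x j = b j"
    using j by (auto simp: x_def y_def ext_bc_def)
  ultimately have "y j - x j = complex_of_real dt * (- \<i> * G)"
    unfolding G_def by (simp add: algebra_simps)
  then have work_vanishes: "Re ((y j - x j) * cnj G) = 0"
    by (simp add: Re_real_mult_i_mult_cnj_self)
  have "j - 1 + 1 = j"
    using j by simp
  then have flux:
      "energy_flux N b b' j = Re (cnj ((x (j + 1))\<^sup>2 + (y (j + 1))\<^sup>2) * ((y j)\<^sup>2 - (x j)\<^sup>2)) / 2"
      "energy_flux N b b' (j - 1) = Re (cnj ((x j)\<^sup>2 + (y j)\<^sup>2) * ((y (j - 1))\<^sup>2 - (x (j - 1))\<^sup>2)) / 2"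
    by (simp_all add: energy_flux_def x_def y_def)
  \<comment> \<open>\<open>y\<^sup>2 - x\<^sup>2 = 2 (y - x) m\<close> turns the two coupling terms into part of the work.\<close>
  have "(y j - x j) * cnj G
      = complex_of_real a * ((y j - x j) * cnj m)
        - cnj ((x (j - 1))\<^sup>2 + (y (j - 1))\<^sup>2) * ((y j)\<^sup>2 - (x j)\<^sup>2) / 2
        - cnj ((x (j + 1))\<^sup>2 + (y (j + 1))\<^sup>2) * ((y j)\<^sup>2 - (x j)\<^sup>2) / 2"
    unfolding G_def m_def s_def by (simp add: field_simps power2_eq_square)
  then have "Re ((y j - x j) * cnj G)
      = a * Re ((y j - x j) * cnj m)
        - Re (cnj ((x (j - 1))\<^sup>2 + (y (j - 1))\<^sup>2) * ((y j)\<^sup>2 - (x j)\<^sup>2)) / 2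
        - Re (cnj ((x (j + 1))\<^sup>2 + (y (j + 1))\<^sup>2) * ((y j)\<^sup>2 - (x j)\<^sup>2)) / 2"
    by simp
  with work_vanishes flux local_energy_diff[of "y j" "y (j - 1)" "x j" "x (j - 1)"]
  show ?thesis
    unfolding a_def m_def by linarith
qed

theorem proposition2p3:
  fixes N :: nat and dt :: real and b b' :: "nat \<Rightarrow> complex"
  assumes "N \<ge> 1" and "dt > 0"
    and "scheme_step N dt b b'"
  shows "Ham N b' = Ham N b"
proof -
  have "Ham N b' - Ham N b = (\<Sum>j\<in>{Suc 0..N}. energy_flux N b b' j - energy_flux N b b' (j - 1))"
    unfolding Ham_def sum_subtractf[symmetric]
    using scheme_step_site_energy_diff[OF assms(3)] by (intro sum.cong) simp_all
  also have "\<dots> = 0"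
    by (subst sum_telescope'') simp_all
  finally show ?thesis by simp
qed

end
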